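(* Tight GFG-NCWs are weak-type: every tight GFG-NCW $\mathcal{A}=\langle\Sigma,Q,Q_0,\delta,\alpha\rangle$ whose language is recognized by some GFG-NWW has an equivalent GFG-NWW on the same structure, i.e. there is $\alpha'\subseteq Q$ such that $\langle\Sigma,Q,Q_0,\delta,\alpha'\rangle$ is a weak automaton, is GFG, and recognizes $L(\mathcal{A})$.
   Context: An automaton $\langle\Sigma,Q,Q_0,\delta,\alpha\rangle$ has $\delta:Q\times\Sigma\to2^Q$; runs are accepting if the set $S$ of infinitely visited states satisfies $\alpha$: co-Büchi ($\alpha\subseteq Q$): $S\cap\alpha=\emptyset$; Büchi: $S\cap\alpha\ne\emptyset$. A Büchi automaton is weak if every strongly connected component $C$ of its state graph satisfies $C\subseteq\alpha$ or $C\cap\alpha=\emptyset$ (it may equivalently be viewed as a co-Büchi automaton with rejecting set $Q\setminus\alpha$). NCW: nondeterministic co-Büchi word automaton; NWW: nondeterministic weak word automaton. $\mathcal{A}$ is GFG if there is a strategy $g:\Sigma^*\to Q$ such that for every $w=a_1a_2\cdots$, $g(\epsilon),g(a_1),g(a_1a_2),\ldots$ is a run on $w$, accepting whenever $w\in L(\mathcal{A})$. Finite-state strategies are transducers $g=\langle\Sigma,Q,M,m_0,\rho,\tau\rangle$ (finite memories $M$, $\rho:M\times\Sigma\to M$ extended to words from $m_0$, $\tau:M\to Q$, $g(u)=\tau(\rho(u))$); $m$ is a memory of $q$ if $\tau(m)=q$. $\mathcal{A}_g=\langle\Sigma,M,m_0,\rho,\alpha_g\rangle$ with $\alpha_g=\{m\mid\tau(m)\in\alpha\}$.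 A transition $\langle q,a,q'\rangle$ is used by $g$ if $q=g(u)$, $q'=g(ua)$ for some $u$. A combination of paths from a set $P$ of finite paths is the union of the element sets of a nonempty subset of $P$. For memories $m\neq m'$ with $\tau(m)=\tau(m')$, $m$ is replaceable by $m'$ if the set of paths of $\mathcal{A}_g$ from $m'$ to $m$ is empty or all its combinations are accepting. $\mathcal{A}$ is tight if for some finite-state strategy $g$ witnessing its GFGness, every transition is used by $g$ and no memory is replaceable by a different memory of the same state. *)

theory Defs
  imports Main
begin

(* The acceptance condition is passed as a predicate on the set of infinitely visited states. *)

definition automaton :: "'a set \<Rightarrow> 'q set \<Rightarrow> 'q set \<Rightarrow> ('q \<Rightarrow> 'a \<Rightarrow> 'q set) \<Rightarrow> bool" where
  "automaton \<Sigma> Q Q0 \<delta> \<longleftrightarrow> finite \<Sigma> \<and> finite Q \<and> Q0 \<subseteq> Q \<and>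
     (\<forall>q\<in>Q. \<forall>a\<in>\<Sigma>. \<delta> q a \<subseteq> Q)"

definition inf_word :: "'a set \<Rightarrow> (nat \<Rightarrow> 'a) \<Rightarrow> bool" where
  "inf_word \<Sigma> w \<longleftrightarrow> (\<forall>i. w i \<in> \<Sigma>)"

definition is_run :: "'q set \<Rightarrow> ('q \<Rightarrow> 'a \<Rightarrow> 'q set) \<Rightarrow> (nat \<Rightarrow> 'a) \<Rightarrow> (nat \<Rightarrow> 'q) \<Rightarrow> bool" where
  "is_run Q0 \<delta> w r \<longleftrightarrow> r 0 \<in> Q0 \<and> (\<forall>i. r (Suc i) \<in> \<delta> (r i) (w i))"

definition inf_set :: "(nat \<Rightarrow> 'q) \<Rightarrow> 'q set" where
  "inf_set r = {q. \<exists>\<^sub>\<infinity> i. r i = q}"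

definition coBuchi :: "'q set \<Rightarrow> 'q set \<Rightarrow> bool" where
  "coBuchi \<alpha> S \<longleftrightarrow> S \<inter> \<alpha> = {}"

definition Buchi :: "'q set \<Rightarrow> 'q set \<Rightarrow> bool" where
  "Buchi \<alpha> S \<longleftrightarrow> S \<inter> \<alpha> \<noteq> {}"

definition lang :: "'a set \<Rightarrow> 'q set \<Rightarrow> ('q \<Rightarrow> 'a \<Rightarrow> 'q set) \<Rightarrow> ('q set \<Rightarrow> bool) \<Rightarrow> (nat \<Rightarrow> 'a) set" where
  "lang \<Sigma> Q0 \<delta> acc = {w. inf_word \<Sigma> w \<and> (\<exists>r. is_run Q0 \<delta> w r \<and> acc (inf_set r))}"

definition pref :: "(nat \<Rightarrow> 'a) \<Rightarrow> nat \<Rightarrow> 'a list" where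
  "pref w i = map w [0..<i]"

definition gfg_strategy :: "'a set \<Rightarrow> 'q set \<Rightarrow> ('q \<Rightarrow> 'a \<Rightarrow> 'q set) \<Rightarrow> ('q set \<Rightarrow> bool) \<Rightarrow> ('a list \<Rightarrow> 'q) \<Rightarrow> bool" where
  "gfg_strategy \<Sigma> Q0 \<delta> acc g \<longleftrightarrow>
     (\<forall>w. inf_word \<Sigma> w \<longrightarrow>
        is_run Q0 \<delta> w (\<lambda>i. g (pref w i)) \<and>
        (w \<in> lang \<Sigma> Q0 \<delta> acc \<longrightarrow> acc (inf_set (\<lambda>i. g (pref w i)))))"

definition GFG :: "'a set \<Rightarrow> 'q set \<Rightarrow> ('q \<Rightarrow> 'a \<Rightarrow> 'q set) \<Rightarrow> ('q set \<Rightarrow> bool) \<Rightarrow> bool" where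
  "GFG \<Sigma> Q0 \<delta> acc \<longleftrightarrow> (\<exists>g. gfg_strategy \<Sigma> Q0 \<delta> acc g)"

definition edges :: "'a set \<Rightarrow> 'q set \<Rightarrow> ('q \<Rightarrow> 'a \<Rightarrow> 'q set) \<Rightarrow> ('q \<times> 'q) set" where
  "edges \<Sigma> Q \<delta> = {(q, q'). q \<in> Q \<and> (\<exists>a\<in>\<Sigma>. q' \<in> \<delta> q a)}"

definition SCCs :: "'a set \<Rightarrow> 'q set \<Rightarrow> ('q \<Rightarrow> 'a \<Rightarrow> 'q set) \<Rightarrow> 'q set set" where
  "SCCs \<Sigma> Q \<delta> = (\<lambda>q. {q' \<in> Q. (q, q') \<in> (edges \<Sigma> Q \<delta>)\<^sup>* \<and> (q', q) \<in> (edges \<Sigma> Q \<delta>)\<^sup>*}) ` Q"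

definition weak :: "'a set \<Rightarrow> 'q set \<Rightarrow> ('q \<Rightarrow> 'a \<Rightarrow> 'q set) \<Rightarrow> 'q set \<Rightarrow> bool" where
  "weak \<Sigma> Q \<delta> \<alpha> \<longleftrightarrow> (\<forall>C \<in> SCCs \<Sigma> Q \<delta>. C \<subseteq> \<alpha> \<or> C \<inter> \<alpha> = {})"

(* Finite-state strategies: transducers with memories M (a finite set of naturals,
   w.l.o.g.), initial memory m0, update rho, output tau. *)
definition transducer :: "'a set \<Rightarrow> nat set \<Rightarrow> nat \<Rightarrow> (nat \<Rightarrow> 'a \<Rightarrow> nat) \<Rightarrow> bool" where
  "transducer \<Sigma> M m0 \<rho> \<longleftrightarrow> finite M \<and> m0 \<in> M \<and> (\<forall>m\<in>M. \<forall>a\<in>\<Sigma>. \<rho> m a \<in> M)"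

definition strat :: "nat \<Rightarrow> (nat \<Rightarrow> 'a \<Rightarrow> nat) \<Rightarrow> (nat \<Rightarrow> 'q) \<Rightarrow> 'a list \<Rightarrow> 'q" where
  "strat m0 \<rho> \<tau> u = \<tau> (fold (\<lambda>a m. \<rho> m a) u m0)"

definition used :: "'a set \<Rightarrow> ('a list \<Rightarrow> 'q) \<Rightarrow> 'q \<Rightarrow> 'a \<Rightarrow> 'q \<Rightarrow> bool" where
  "used \<Sigma> g q a q' \<longleftrightarrow> (\<exists>u \<in> lists \<Sigma>. g u = q \<and> g (u @ [a]) = q')"

definition paths_g :: "'a set \<Rightarrow> (nat \<Rightarrow> 'a \<Rightarrow> nat) \<Rightarrow> nat \<Rightarrow> nat \<Rightarrow> nat list set" where
  "paths_g \<Sigma> \<rho> m1 m2 = {p. p \<noteq> [] \<and> hd p = m1 \<and> last p = m2 \<and>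
      (\<forall>i. Suc i < length p \<longrightarrow> (\<exists>a\<in>\<Sigma>. p ! Suc i = \<rho> (p ! i) a))}"

definition combinations :: "nat list set \<Rightarrow> nat set set" where
  "combinations P = {\<Union>p\<in>P'. set p | P'. P' \<subseteq> P \<and> P' \<noteq> {}}"

definition alpha_g :: "nat set \<Rightarrow> (nat \<Rightarrow> 'q) \<Rightarrow> 'q set \<Rightarrow> nat set" where
  "alpha_g M \<tau> \<alpha> = {m \<in> M. \<tau> m \<in> \<alpha>}"

(* m replaceable by m' (A_g is a co-Buechi automaton with rejecting set alpha_g) *)
definition replaceable :: "'a set \<Rightarrow> nat set \<Rightarrow> (nat \<Rightarrow> 'a \<Rightarrow> nat) \<Rightarrow> (nat \<Rightarrow> 'q) \<Rightarrow> 'q set \<Rightarrow> nat \<Rightarrow> nat \<Rightarrow> bool" where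
  "replaceable \<Sigma> M \<rho> \<tau> \<alpha> m m' \<longleftrightarrow> m \<noteq> m' \<and> \<tau> m = \<tau> m' \<and>
     (paths_g \<Sigma> \<rho> m' m = {} \<or>
      (\<forall>S \<in> combinations (paths_g \<Sigma> \<rho> m' m). coBuchi (alpha_g M \<tau> \<alpha>) S))"

definition tight :: "'a set \<Rightarrow> 'q set \<Rightarrow> 'q set \<Rightarrow> ('q \<Rightarrow> 'a \<Rightarrow> 'q set) \<Rightarrow> 'q set \<Rightarrow> bool" where
  "tight \<Sigma> Q Q0 \<delta> \<alpha> \<longleftrightarrow> (\<exists>M m0 \<rho> \<tau>. transducer \<Sigma> M m0 \<rho> \<and>
      gfg_strategy \<Sigma> Q0 \<delta> (coBuchi \<alpha>) (strat m0 \<rho> \<tau>) \<and>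
      (\<forall>q\<in>Q. \<forall>a\<in>\<Sigma>. \<forall>q'\<in>\<delta> q a. used \<Sigma> (strat m0 \<rho> \<tau>) q a q') \<and>
      (\<forall>m\<in>M. \<forall>m'\<in>M. \<not> replaceable \<Sigma> M \<rho> \<tau> \<alpha> m m'))"

end

theory Submission
  imports Defs "HOL-Library.Omega_Words_Fun"
begin

(* Let the transducer g witness tightness, and let alpha' consist of the states whose SCC
   avoids alpha. The Buechi condition alpha' is weak, and a run visiting alpha' infinitely
   often eventually stays in an alpha-free SCC, so it accepts no more than A. Conversely, let
   w be in L(A) and m a memory recurring in the run of g on w. If the SCC of the state of m met
   alpha, tightness (every transition used, no memory replaceable) would give a cycle of A_g
   through m visiting alpha. After any prefix leading to m, the alpha-free continuation of w
   gives a word of L(A) = L(B), so the strategy of B visits beta along it before m recurs.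
   Alternating such segments with the cycle yields a word accepted by the strategy of B, hence
   a word of L(A), on which g nevertheless visits alpha infinitely often. So g visits alpha'
   infinitely often on every word of L(A), and it witnesses GFGness for alpha'. *)

lemma inf_set_eq_limit: "inf_set r = limit r"
  unfolding inf_set_def limit_def ..

lemma pref_eq_prefix [simp]: "pref w n = prefix n w"
  unfolding pref_def subsequence_def ..

lemma Buchi_inf_set_iff: "finite \<alpha> \<Longrightarrow> Buchi \<alpha> (inf_set r) \<longleftrightarrow> (\<exists>\<^sub>\<infinity>n. r n \<in> \<alpha>)"
  unfolding Buchi_def inf_set_eq_limit by (simp add: fin_ex_inf_eq_limit)

lemma coBuchi_inf_set_iff: "finite \<alpha> \<Longrightarrow> coBuchi \<alpha> (inf_set r) \<longleftrightarrow> \<not> (\<exists>\<^sub>\<infinity>n. r n \<in> \<alpha>)"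
  unfolding coBuchi_def inf_set_eq_limit by (simp add: fin_ex_inf_eq_limit)

lemma inf_word_conc: "u \<in> lists \<Sigma> \<Longrightarrow> inf_word \<Sigma> x \<Longrightarrow> inf_word \<Sigma> (u \<frown> x)"
  unfolding inf_word_def conc_def by (auto simp: in_lists_conv_set)

lemma prefix_in_lists: "inf_word \<Sigma> w \<Longrightarrow> prefix n w \<in> lists \<Sigma>"
  unfolding inf_word_def subsequence_def by auto

lemma prefix_suffix_eq_subsequence: "prefix n (suffix i w) = (w [i \<rightarrow> i + n])"
  by (metis subsequence_prefix_suffix diff_add_inverse)

lemma run_in_states:
  assumes "automaton \<Sigma> Q Q0 \<delta>" "is_run Q0 \<delta> w r" "inf_word \<Sigma> w"
  shows "r i \<in> Q"
  using assms unfolding automaton_def is_run_def inf_word_def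
  by (induction i) blast+

lemma run_reaches:
  assumes "automaton \<Sigma> Q Q0 \<delta>" "is_run Q0 \<delta> w r" "inf_word \<Sigma> w" "i \<le> j"
  shows "(r i, r j) \<in> (edges \<Sigma> Q \<delta>)\<^sup>*"
  using assms(4)
proof (induction j rule: dec_induct)
  case (step j)
  have "(r j, r (Suc j)) \<in> edges \<Sigma> Q \<delta>"
    using run_in_states[OF assms(1-3)] assms(2,3) unfolding edges_def is_run_def inf_word_def by auto
  with step.IH show ?case by simp
qed simp

lemma gfg_strategy_run:
  "gfg_strategy \<Sigma> Q0 \<delta> acc g \<Longrightarrow> inf_word \<Sigma> w \<Longrightarrow> is_run Q0 \<delta> w (\<lambda>i. g (prefix i w))"
  unfolding gfg_strategy_def by simp

lemma gfg_strategy_accepting: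
  "gfg_strategy \<Sigma> Q0 \<delta> acc g \<Longrightarrow> w \<in> lang \<Sigma> Q0 \<delta> acc \<Longrightarrow> acc (inf_set (\<lambda>i. g (prefix i w)))"
  unfolding gfg_strategy_def lang_def by simp

lemma gfg_strategy_langI:
  "gfg_strategy \<Sigma> Q0 \<delta> acc g \<Longrightarrow> inf_word \<Sigma> w \<Longrightarrow> acc (inf_set (\<lambda>i. g (prefix i w)))
   \<Longrightarrow> w \<in> lang \<Sigma> Q0 \<delta> acc"
  unfolding lang_def using gfg_strategy_run by blast

lemma gfg_strategy_transfer:
  assumes g: "gfg_strategy \<Sigma> Q0 \<delta> acc g"
    and sub: "lang \<Sigma> Q0 \<delta> acc' \<subseteq> lang \<Sigma> Q0 \<delta> acc"
    and acc': "\<And>w. w \<in> lang \<Sigma> Q0 \<delta> acc \<Longrightarrow> acc' (inf_set (\<lambda>i. g (prefix i w)))"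
  shows "gfg_strategy \<Sigma> Q0 \<delta> acc' g" "lang \<Sigma> Q0 \<delta> acc' = lang \<Sigma> Q0 \<delta> acc"
proof -
  show "gfg_strategy \<Sigma> Q0 \<delta> acc' g"
    using g sub acc' unfolding gfg_strategy_def by auto
  have "lang \<Sigma> Q0 \<delta> acc \<subseteq> lang \<Sigma> Q0 \<delta> acc'"
    using acc' gfg_strategy_langI[OF \<open>gfg_strategy \<Sigma> Q0 \<delta> acc' g\<close>]
    by (auto simp: lang_def)
  with sub show "lang \<Sigma> Q0 \<delta> acc' = lang \<Sigma> Q0 \<delta> acc" by blast
qed

definition alpha_free_scc_states :: "'a set \<Rightarrow> 'q set \<Rightarrow> ('q \<Rightarrow> 'a \<Rightarrow> 'q set) \<Rightarrow> 'q set \<Rightarrow> 'q set" where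
  "alpha_free_scc_states \<Sigma> Q \<delta> \<alpha> =
     {q \<in> Q. \<forall>q'. (q, q') \<in> (edges \<Sigma> Q \<delta>)\<^sup>* \<and> (q', q) \<in> (edges \<Sigma> Q \<delta>)\<^sup>* \<longrightarrow> q' \<notin> \<alpha>}"

lemma alpha_free_scc_states_subset: "alpha_free_scc_states \<Sigma> Q \<delta> \<alpha> \<subseteq> Q"
  unfolding alpha_free_scc_states_def by blast

lemma weak_alpha_free_scc_states: "weak \<Sigma> Q \<delta> (alpha_free_scc_states \<Sigma> Q \<delta> \<alpha>)"
  unfolding weak_def SCCs_def
proof (intro ballI)
  let ?E = "(edges \<Sigma> Q \<delta>)\<^sup>*"
  fix C assume "C \<in> (\<lambda>q. {q' \<in> Q. (q, q') \<in> ?E \<and> (q', q) \<in> ?E}) ` Q"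
  then obtain q0 where C: "C = {q \<in> Q. (q0, q) \<in> ?E \<and> (q, q0) \<in> ?E}" by blast
  have "q2 \<in> alpha_free_scc_states \<Sigma> Q \<delta> \<alpha>"
    if "q1 \<in> C" "q2 \<in> C" and q1: "q1 \<in> alpha_free_scc_states \<Sigma> Q \<delta> \<alpha>" for q1 q2
  proof -
    from that(1,2) C have "(q1, q0) \<in> ?E" "(q0, q2) \<in> ?E" "(q2, q0) \<in> ?E" "(q0, q1) \<in> ?E" "q2 \<in> Q"
      by auto
    then have "(q1, q2) \<in> ?E" "(q2, q1) \<in> ?E" by (metis rtrancl_trans)+
    then have "(q1, q') \<in> ?E \<and> (q', q1) \<in> ?E" if "(q2, q') \<in> ?E" "(q', q2) \<in> ?E" for q'
      using that rtrancl_trans by metis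
    with q1 \<open>q2 \<in> Q\<close> show ?thesis
      unfolding alpha_free_scc_states_def by blast
  qed
  then show "C \<subseteq> alpha_free_scc_states \<Sigma> Q \<delta> \<alpha> \<or> C \<inter> alpha_free_scc_states \<Sigma> Q \<delta> \<alpha> = {}"
    by blast
qed

lemma lang_Buchi_alpha_free_subset:
  assumes "automaton \<Sigma> Q Q0 \<delta>"
  shows "lang \<Sigma> Q0 \<delta> (Buchi (alpha_free_scc_states \<Sigma> Q \<delta> \<alpha>)) \<subseteq> lang \<Sigma> Q0 \<delta> (coBuchi \<alpha>)"
proof
  fix w assume "w \<in> lang \<Sigma> Q0 \<delta> (Buchi (alpha_free_scc_states \<Sigma> Q \<delta> \<alpha>))"
  then obtain r q where w: "inf_word \<Sigma> w" and r: "is_run Q0 \<delta> w r"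
    and q: "q \<in> inf_set r" "q \<in> alpha_free_scc_states \<Sigma> Q \<delta> \<alpha>"
    unfolding lang_def Buchi_def by blast
  have "q' \<notin> \<alpha>" if q': "q' \<in> inf_set r" for q'
  proof -
    have recurs: "\<forall>N. \<exists>n\<ge>N. r n = p" if "p \<in> inf_set r" for p
      using that unfolding inf_set_def INFM_nat_le by simp
    obtain i where "r i = q" using recurs[OF q(1)] by blast
    obtain j where "i \<le> j" "r j = q'" using recurs[OF q'] by blast
    obtain k where "j \<le> k" "r k = q" using recurs[OF q(1)] by blast
    have "(q, q') \<in> (edges \<Sigma> Q \<delta>)\<^sup>*" "(q', q) \<in> (edges \<Sigma> Q \<delta>)\<^sup>*"
      using run_reaches[OF assms r w \<open>i \<le> j\<close>] run_reaches[OF assms r w \<open>j \<le> k\<close>]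
        \<open>r i = q\<close> \<open>r j = q'\<close> \<open>r k = q\<close>
      by simp_all
    with q(2) show ?thesis unfolding alpha_free_scc_states_def by blast
  qed
  then show "w \<in> lang \<Sigma> Q0 \<delta> (coBuchi \<alpha>)"
    using w r unfolding lang_def coBuchi_def by blast
qed

abbreviation mfold :: "('m \<Rightarrow> 'a \<Rightarrow> 'm) \<Rightarrow> 'a list \<Rightarrow> 'm \<Rightarrow> 'm" where
  "mfold \<rho> u m \<equiv> fold (\<lambda>a m. \<rho> m a) u m"

lemma mfold_in_memories:
  "transducer \<Sigma> M m0 \<rho> \<Longrightarrow> m \<in> M \<Longrightarrow> u \<in> lists \<Sigma> \<Longrightarrow> mfold \<rho> u m \<in> M"
  unfolding transducer_def by (induction u arbitrary: m) auto

lemma paths_g_word: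
  assumes "p \<in> paths_g \<Sigma> \<rho> m1 m2"
  shows "\<exists>u\<in>lists \<Sigma>. mfold \<rho> u m1 = m2"
proof -
  have p: "p \<noteq> []" "last p = m2"
    using assms unfolding paths_g_def by auto
  have "\<exists>u\<in>lists \<Sigma>. mfold \<rho> u m1 = p ! i" if "i < length p" for i
    using that
  proof (induction i)
    case 0
    then show ?case using assms by (auto simp: paths_g_def hd_conv_nth intro: bexI[of _ "[]"])
  next
    case (Suc i)
    then obtain u where "u \<in> lists \<Sigma>" "mfold \<rho> u m1 = p ! i" by auto
    moreover obtain a where "a \<in> \<Sigma>" "p ! Suc i = \<rho> (p ! i) a"
      using assms Suc.prems unfolding paths_g_def by blast
    ultimately show ?case by (intro bexI[of _ "u @ [a]"]) auto
  qed
  from this[of "length p - 1"] p show ?thesis by (simp add: last_conv_nth)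
qed

locale tight_transducer =
  fixes \<Sigma> :: "'a set" and Q :: "'q set" and \<delta> :: "'q \<Rightarrow> 'a \<Rightarrow> 'q set" and \<alpha> :: "'q set"
    and M :: "nat set" and m0 :: nat and \<rho> :: "nat \<Rightarrow> 'a \<Rightarrow> nat" and \<tau> :: "nat \<Rightarrow> 'q"
  assumes transducer: "transducer \<Sigma> M m0 \<rho>"
    and all_used: "\<forall>q\<in>Q. \<forall>a\<in>\<Sigma>. \<forall>q'\<in>\<delta> q a. used \<Sigma> (strat m0 \<rho> \<tau>) q a q'"
    and irreplaceable: "\<forall>m\<in>M. \<forall>m'\<in>M. \<not> replaceable \<Sigma> M \<rho> \<tau> \<alpha> m m'"
begin

lemma reachable_memory_in: "u \<in> lists \<Sigma> \<Longrightarrow> mfold \<rho> u m0 \<in> M"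
  using mfold_in_memories[OF transducer] transducer unfolding transducer_def by blast

(* Only the first disjunct of replaceability matters here: if m2 is not replaceable by m1,
   some path of A_g leads from m1 to m2. *)
lemma same_state_memory_reachable:
  assumes "m1 \<in> M" "m2 \<in> M" "\<tau> m1 = \<tau> m2"
  shows "\<exists>u\<in>lists \<Sigma>. mfold \<rho> u m1 = m2"
proof (cases "m1 = m2")
  case True
  then show ?thesis by (auto intro: bexI[of _ "[]"])
next
  case False
  have "\<not> replaceable \<Sigma> M \<rho> \<tau> \<alpha> m2 m1"
    using irreplaceable assms(1,2) by blast
  with False assms(3) have "paths_g \<Sigma> \<rho> m1 m2 \<noteq> {}"
    unfolding replaceable_def by auto
  then show ?thesis using paths_g_word by blast
qed

lemma reachable_state_from_memory:
  assumes "(\<tau> m, q) \<in> (edges \<Sigma> Q \<delta>)\<^sup>*" "m \<in> M"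
  shows "\<exists>u\<in>lists \<Sigma>. \<tau> (mfold \<rho> u m) = q"
  using assms(1)
proof (induction rule: rtrancl_induct)
  case base
  then show ?case by (auto intro: bexI[of _ "[]"])
next
  case (step q1 q2)
  then obtain u where u: "u \<in> lists \<Sigma>" "\<tau> (mfold \<rho> u m) = q1" by blast
  from step.hyps(2) obtain a where a: "q1 \<in> Q" "a \<in> \<Sigma>" "q2 \<in> \<delta> q1 a"
    unfolding edges_def by blast
  with all_used obtain v where v: "v \<in> lists \<Sigma>" "\<tau> (mfold \<rho> v m0) = q1" "\<tau> (mfold \<rho> (v @ [a]) m0) = q2"
    unfolding used_def strat_def by blast
  \<comment> \<open>move to the memory g has after v, whose a-successor is a memory of q2\<close>
  obtain u' where "u' \<in> lists \<Sigma>" "mfold \<rho> u' (mfold \<rho> u m) = mfold \<rho> v m0"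
    using same_state_memory_reachable[of "mfold \<rho> u m" "mfold \<rho> v m0"]
      mfold_in_memories[OF transducer assms(2) u(1)] reachable_memory_in[OF v(1)] u(2) v(2)
    by auto
  with u v a show ?case by (intro bexI[of _ "u @ u' @ [a]"]) auto
qed

lemma memory_cycle_through:
  assumes "m \<in> M" "(\<tau> m, q) \<in> (edges \<Sigma> Q \<delta>)\<^sup>*" "(q, \<tau> m) \<in> (edges \<Sigma> Q \<delta>)\<^sup>*"
  obtains u v where "u \<in> lists \<Sigma>" "v \<in> lists \<Sigma>" "\<tau> (mfold \<rho> u m) = q" "mfold \<rho> (u @ v) m = m"
proof -
  obtain u where u: "u \<in> lists \<Sigma>" "\<tau> (mfold \<rho> u m) = q"
    using reachable_state_from_memory[OF assms(2,1)] by blast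
  have um: "mfold \<rho> u m \<in> M" using mfold_in_memories[OF transducer assms(1) u(1)] .
  obtain v where v: "v \<in> lists \<Sigma>" "\<tau> (mfold \<rho> v (mfold \<rho> u m)) = \<tau> m"
    using reachable_state_from_memory[OF _ um] assms(3) u(2) by blast
  obtain v' where "v' \<in> lists \<Sigma>" "mfold \<rho> v' (mfold \<rho> v (mfold \<rho> u m)) = m"
    using same_state_memory_reachable[OF mfold_in_memories[OF transducer um v(1)] assms(1) v(2)] by blast
  with u v show ?thesis by (intro that[of u "v @ v'"]) auto
qed

end

lemma prefix_chain_limit:
  fixes z :: "nat \<Rightarrow> 'a list"
  assumes grow: "\<And>n. \<exists>s. z (Suc n) = z n @ s"
    and unbounded: "\<And>n. n \<le> length (z n)"
  obtains w where "\<And>n. prefix (length (z n)) w = z n"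
proof
  have extends: "\<exists>s. z n = z k @ s" if "k \<le> n" for k n
    using that
  proof (induction n rule: dec_induct)
    case base
    show ?case by (metis append_Nil2)
  next
    case (step n)
    then show ?case by (metis append_assoc grow)
  qed
  define w where "w p = z (Suc p) ! p" for p
  show "prefix (length (z n)) w = z n" for n
  proof (rule nth_equalityI)
    fix p assume "p < length (prefix (length (z n)) w)"
    then have p: "p < length (z n)" by simp
    have "z n ! p = z (Suc p) ! p"
    proof (cases "Suc p \<le> n")
      case True
      then show ?thesis using extends[of "Suc p" n] unbounded[of "Suc p"] by (auto simp: nth_append)
    next
      case False
      then show ?thesis using extends[of n "Suc p"] p by (auto simp: nth_append)
    qed
    then show "prefix (length (z n)) w ! p = z n ! p" using p by (simp add: w_def)
  qed simp
qed

lemma recurrent_extension_word: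
  fixes Inv :: "'a list \<Rightarrow> bool" and Ps :: "('a list \<Rightarrow> bool) set"
  assumes "Inv z0"
    and extend: "\<And>u. Inv u \<Longrightarrow>
      \<exists>s. s \<noteq> [] \<and> Inv (u @ s) \<and> (\<forall>P\<in>Ps. \<exists>k\<le>length s. P (u @ take k s))"
  shows "\<exists>w. (\<exists>\<^sub>\<infinity>n. Inv (prefix n w)) \<and> (\<forall>P\<in>Ps. \<exists>\<^sub>\<infinity>n. P (prefix n w))"
proof -
  obtain ext where ext: "\<And>u. Inv u \<Longrightarrow> ext u \<noteq> [] \<and> Inv (u @ ext u) \<and>
      (\<forall>P\<in>Ps. \<exists>k\<le>length (ext u). P (u @ take k (ext u)))"
    using extend by metis
  define z where "z n = ((\<lambda>u. u @ ext u) ^^ n) z0" for n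
  have z_Suc: "z (Suc n) = z n @ ext (z n)" for n
    unfolding z_def by simp
  have Inv_z: "Inv (z n)" for n
    by (induction n) (use \<open>Inv z0\<close> ext in \<open>simp_all add: z_def\<close>)
  have len: "n \<le> length (z n)" for n
  proof (induction n)
    case (Suc n)
    have "0 < length (ext (z n))" using ext[OF Inv_z[of n]] by blast
    with Suc.IH show ?case unfolding z_Suc length_append by linarith
  qed simp
  obtain w where w: "\<And>n. prefix (length (z n)) w = z n"
    using prefix_chain_limit[of z] z_Suc len by blast
  have prefix_z: "prefix l w = take l (z n)" if "l \<le> length (z n)" for l n
  proof -
    have "take l (z n) = take l (prefix (length (z n)) w)" by (simp only: w)
    with that show ?thesis by simp
  qed
  have "\<exists>\<^sub>\<infinity>n. Inv (prefix n w)"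
    unfolding INFM_nat_le
  proof
    fix m
    have "Inv (prefix (length (z m)) w)"
      using Inv_z[of m] by (simp only: w)
    with len[of m] show "\<exists>n\<ge>m. Inv (prefix n w)" by blast
  qed
  moreover have "\<exists>\<^sub>\<infinity>n. P (prefix n w)" if P: "P \<in> Ps" for P
    unfolding INFM_nat_le
  proof
    fix m
    obtain k where k: "k \<le> length (ext (z m))" "P (z m @ take k (ext (z m)))"
      using ext[OF Inv_z[of m]] P by blast
    then have "prefix (length (z m) + k) w = z m @ take k (ext (z m))"
      using prefix_z[of "length (z m) + k" "Suc m"] by (simp add: z_Suc)
    with k len[of m] show "\<exists>n\<ge>m. P (prefix n w)"
      by (metis le_add1 order_trans)
  qed
  ultimately show ?thesis by blast
qed

lemma coBuchi_strategy_langI: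
  assumes g: "gfg_strategy \<Sigma> Q0 \<delta> (coBuchi \<alpha>) g" and w: "inf_word \<Sigma> w"
    and safe: "\<forall>\<^sub>\<infinity>n. g (prefix n w) \<notin> \<alpha>"
  shows "w \<in> lang \<Sigma> Q0 \<delta> (coBuchi \<alpha>)"
proof (rule gfg_strategy_langI[OF g w])
  have "q \<notin> \<alpha>" if "\<exists>\<^sub>\<infinity>n. g (prefix n w) = q" for q
    using INFM_EX[OF INFM_conjI[OF that safe]] by blast
  then show "coBuchi \<alpha> (inf_set (\<lambda>n. g (prefix n w)))"
    unfolding coBuchi_def inf_set_def by blast
qed

lemma mfold_prefix_suffix:
  "mfold \<rho> (prefix n (suffix i w)) (mfold \<rho> (prefix i w) m) = mfold \<rho> (prefix (i + n) w) m"
  by (simp add: prefix_suffix_eq_subsequence subsequence_append)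

lemma inf_word_if_frequently_prefix_in_lists:
  assumes "\<exists>\<^sub>\<infinity>n. prefix n w \<in> lists \<Sigma>"
  shows "inf_word \<Sigma> w"
  unfolding inf_word_def
proof
  fix i
  obtain n where n: "Suc i \<le> n" "prefix n w \<in> lists \<Sigma>"
    using assms unfolding INFM_nat_le by blast
  then have "w i \<in> set (prefix n w)" by simp
  with n(2) show "w i \<in> \<Sigma>" by (meson in_listsD)
qed

(* Appending to y a continuation x along which the strategy of A stays out of alpha gives a
   word of L(A) = L(B), so the strategy of B visits beta somewhere after y. *)
lemma gfg_Buchi_visits_on_safe_continuation:
  fixes \<rho> :: "'m \<Rightarrow> 'a \<Rightarrow> 'm" and \<tau> :: "'m \<Rightarrow> 'q" and gB :: "'a list \<Rightarrow> 'p"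
  assumes gA: "gfg_strategy \<Sigma> Q0 \<delta> (coBuchi \<alpha>) (\<lambda>y. \<tau> (mfold \<rho> y m0))"
    and gB: "gfg_strategy \<Sigma> P0 \<delta>B (Buchi \<beta>) gB" and "finite \<beta>"
    and L: "lang \<Sigma> P0 \<delta>B (Buchi \<beta>) = lang \<Sigma> Q0 \<delta> (coBuchi \<alpha>)"
    and y: "y \<in> lists \<Sigma>"
    and x: "inf_word \<Sigma> x" "\<And>n. \<tau> (mfold \<rho> (prefix n x) (mfold \<rho> y m0)) \<notin> \<alpha>"
  obtains k where "gB (y @ prefix k x) \<in> \<beta>"
proof -
  have "\<forall>\<^sub>\<infinity>n. \<tau> (mfold \<rho> (prefix n (y \<frown> x)) m0) \<notin> \<alpha>"
    unfolding MOST_nat_le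
  proof (intro exI allI impI)
    fix n assume "length y \<le> n"
    then show "\<tau> (mfold \<rho> (prefix n (y \<frown> x)) m0) \<notin> \<alpha>"
      using x(2)[of "n - length y"] by simp
  qed
  then have "y \<frown> x \<in> lang \<Sigma> Q0 \<delta> (coBuchi \<alpha>)"
    using coBuchi_strategy_langI[OF gA] inf_word_conc[OF y x(1)] by blast
  then have "\<exists>\<^sub>\<infinity>n. gB (prefix n (y \<frown> x)) \<in> \<beta>"
    using gfg_strategy_accepting[OF gB] L Buchi_inf_set_iff[OF \<open>finite \<beta>\<close>] by simp
  then obtain n where n: "length y \<le> n" "gB (prefix n (y \<frown> x)) \<in> \<beta>"
    unfolding INFM_nat_le by blast
  then have "gB (y @ prefix (n - length y) x) \<in> \<beta>" by simp
  then show thesis by (rule that)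
qed

lemma no_alpha_cycle_at_safely_recurrent_memory:
  fixes \<rho> :: "'m \<Rightarrow> 'a \<Rightarrow> 'm" and \<tau> :: "'m \<Rightarrow> 'q" and gB :: "'a list \<Rightarrow> 'p"
  assumes gA: "gfg_strategy \<Sigma> Q0 \<delta> (coBuchi \<alpha>) (\<lambda>y. \<tau> (mfold \<rho> y m0))" and "finite \<alpha>"
    and gB: "gfg_strategy \<Sigma> P0 \<delta>B (Buchi \<beta>) gB" and "finite \<beta>"
    and L: "lang \<Sigma> P0 \<delta>B (Buchi \<beta>) = lang \<Sigma> Q0 \<delta> (coBuchi \<alpha>)"
    and y0: "y0 \<in> lists \<Sigma>" "mfold \<rho> y0 m0 = m"
    and x: "inf_word \<Sigma> x" "\<And>n. \<tau> (mfold \<rho> (prefix n x) m) \<notin> \<alpha>"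
      "\<exists>\<^sub>\<infinity>n. mfold \<rho> (prefix n x) m = m"
    and cycle: "u \<in> lists \<Sigma>" "v \<in> lists \<Sigma>" "\<tau> (mfold \<rho> u m) \<in> \<alpha>" "mfold \<rho> (u @ v) m = m"
  shows False
proof -
  define Inv where "Inv y \<longleftrightarrow> y \<in> lists \<Sigma> \<and> mfold \<rho> y m0 = m" for y
  define hits_\<beta> where "hits_\<beta> y \<longleftrightarrow> gB y \<in> \<beta>" for y
  define hits_\<alpha> where "hits_\<alpha> y \<longleftrightarrow> \<tau> (mfold \<rho> y m0) \<in> \<alpha>" for y
  \<comment> \<open>follow x until beta is visited and then until m recurs; close with the alpha-cycle u v\<close>
  have extend: "\<exists>s. s \<noteq> [] \<and> Inv (y @ s) \<and> (\<forall>P\<in>{hits_\<beta>, hits_\<alpha>}. \<exists>k\<le>length s. P (y @ take k s))"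
    if y: "Inv y" for y
  proof -
    obtain k where k: "hits_\<beta> (y @ prefix k x)"
      using gfg_Buchi_visits_on_safe_continuation[OF gA gB \<open>finite \<beta>\<close> L _ x(1)] x(2) y
      unfolding Inv_def hits_\<beta>_def by metis
    obtain J where J: "k < J" "mfold \<rho> (prefix J x) m = m"
      using x(3) unfolding INFM_nat by blast
    define s where "s = prefix J x @ u @ v"
    have "Inv (y @ s)"
      using y J(2) cycle x(1) prefix_in_lists unfolding Inv_def s_def by auto
    moreover have "hits_\<beta> (y @ take k s)"
      using k J(1) unfolding s_def by simp
    moreover have "hits_\<alpha> (y @ take (J + length u) s)"
      using y J(2) cycle(3) unfolding s_def Inv_def hits_\<alpha>_def by simp
    moreover have "s \<noteq> []" "J + length u \<le> length s" "k \<le> length s"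
      using J(1) unfolding s_def by auto
    ultimately show ?thesis
      by (intro exI[of _ s]) (simp only: ball_simps; blast)
  qed
  have "Inv y0" using y0 unfolding Inv_def by simp
  obtain ws where ws_Inv: "\<exists>\<^sub>\<infinity>n. Inv (prefix n ws)"
    and ws_hits: "\<forall>P\<in>{hits_\<beta>, hits_\<alpha>}. \<exists>\<^sub>\<infinity>n. P (prefix n ws)"
    using recurrent_extension_word[OF \<open>Inv y0\<close> extend] by blast
  have "\<exists>\<^sub>\<infinity>n. prefix n ws \<in> lists \<Sigma>"
    using ws_Inv unfolding Inv_def by (rule INFM_mono) simp
  then have "inf_word \<Sigma> ws" by (rule inf_word_if_frequently_prefix_in_lists)
  have often_\<beta>: "\<exists>\<^sub>\<infinity>n. gB (prefix n ws) \<in> \<beta>"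
    and often_\<alpha>: "\<exists>\<^sub>\<infinity>n. \<tau> (mfold \<rho> (prefix n ws) m0) \<in> \<alpha>"
    using ws_hits unfolding hits_\<beta>_def hits_\<alpha>_def by simp_all
  with \<open>inf_word \<Sigma> ws\<close> have "ws \<in> lang \<Sigma> P0 \<delta>B (Buchi \<beta>)"
    using gfg_strategy_langI[OF gB] Buchi_inf_set_iff[OF \<open>finite \<beta>\<close>] by blast
  then have "\<forall>\<^sub>\<infinity>n. \<tau> (mfold \<rho> (prefix n ws) m0) \<notin> \<alpha>"
    using gfg_strategy_accepting[OF gA] L coBuchi_inf_set_iff[OF \<open>finite \<alpha>\<close>] by simp
  then show False
    using INFM_EX[OF INFM_conjI[OF often_\<alpha>]] by blast
qed

context tight_transducer
begin

lemma recurrent_memory_alpha_free: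
  fixes P0 :: "'p set" and \<delta>B :: "'p \<Rightarrow> 'a \<Rightarrow> 'p set" and \<beta> :: "'p set" and gB :: "'a list \<Rightarrow> 'p"
  assumes A: "automaton \<Sigma> Q Q0 \<delta>" and "finite \<alpha>"
    and gA: "gfg_strategy \<Sigma> Q0 \<delta> (coBuchi \<alpha>) (strat m0 \<rho> \<tau>)"
    and gB: "gfg_strategy \<Sigma> P0 \<delta>B (Buchi \<beta>) gB" and "finite \<beta>"
    and L: "lang \<Sigma> P0 \<delta>B (Buchi \<beta>) = lang \<Sigma> Q0 \<delta> (coBuchi \<alpha>)"
    and wL: "w \<in> lang \<Sigma> Q0 \<delta> (coBuchi \<alpha>)"
    and m: "\<exists>\<^sub>\<infinity>n. mfold \<rho> (prefix n w) m0 = m"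
  shows "\<tau> m \<in> alpha_free_scc_states \<Sigma> Q \<delta> \<alpha>"
proof (rule ccontr)
  have w: "inf_word \<Sigma> w" using wL unfolding lang_def by blast
  define mr where "mr n = mfold \<rho> (prefix n w) m0" for n
  have strat_mr: "strat m0 \<rho> \<tau> (prefix n w) = \<tau> (mr n)" for n
    unfolding strat_def mr_def ..
  obtain n0 where "mr n0 = m" using INFM_EX[OF m] unfolding mr_def by blast
  then have "m \<in> M" unfolding mr_def using reachable_memory_in prefix_in_lists[OF w] by blast
  have "is_run Q0 \<delta> w (\<lambda>n. \<tau> (mr n))"
    using gfg_strategy_run[OF gA w] by (simp add: strat_mr)
  then have "\<tau> m \<in> Q" using run_in_states[OF A _ w] \<open>mr n0 = m\<close> by blast
  assume "\<tau> m \<notin> alpha_free_scc_states \<Sigma> Q \<delta> \<alpha>"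
  with \<open>\<tau> m \<in> Q\<close> obtain q where q: "(\<tau> m, q) \<in> (edges \<Sigma> Q \<delta>)\<^sup>*" "(q, \<tau> m) \<in> (edges \<Sigma> Q \<delta>)\<^sup>*" "q \<in> \<alpha>"
    unfolding alpha_free_scc_states_def by blast
  obtain u v where cycle: "u \<in> lists \<Sigma>" "v \<in> lists \<Sigma>" "\<tau> (mfold \<rho> u m) \<in> \<alpha>" "mfold \<rho> (u @ v) m = m"
    using memory_cycle_through[OF \<open>m \<in> M\<close> q(1,2)] q(3) by metis
  have "\<forall>\<^sub>\<infinity>n. \<tau> (mr n) \<notin> \<alpha>"
    using gfg_strategy_accepting[OF gA wL] coBuchi_inf_set_iff[OF \<open>finite \<alpha>\<close>] by (simp add: strat_mr)
  then obtain N where "\<forall>n\<ge>N. \<tau> (mr n) \<notin> \<alpha>" unfolding MOST_nat_le by blast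
  moreover obtain i where "N \<le> i" "mr i = m" using m unfolding INFM_nat_le mr_def by blast
  ultimately have safe: "\<tau> (mr (i + n)) \<notin> \<alpha>" for n by simp
  have mfold_suffix: "mfold \<rho> (prefix n (suffix i w)) m = mr (i + n)" for n
    using mfold_prefix_suffix \<open>mr i = m\<close> unfolding mr_def by metis
  have "\<exists>\<^sub>\<infinity>n. mfold \<rho> (prefix n (suffix i w)) m = m"
    unfolding mfold_suffix INFM_nat_le
  proof
    fix K
    obtain n where "i + K \<le> n" "mr n = m" using m unfolding INFM_nat_le mr_def by blast
    then show "\<exists>k\<ge>K. mr (i + k) = m" by (intro exI[of _ "n - i"]) auto
  qed
  moreover have "inf_word \<Sigma> (suffix i w)" using w unfolding inf_word_def by simp
  moreover have "mfold \<rho> (prefix i w) m0 = m" using \<open>mr i = m\<close> unfolding mr_def .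
  moreover have "\<tau> (mfold \<rho> (prefix n (suffix i w)) m) \<notin> \<alpha>" for n
    using safe unfolding mfold_suffix .
  ultimately show False
    using no_alpha_cycle_at_safely_recurrent_memory[OF gA[unfolded strat_def[abs_def]] \<open>finite \<alpha>\<close>
        gB \<open>finite \<beta>\<close> L prefix_in_lists[OF w] _ _ _ _ cycle]
    by blast
qed

lemma strategy_visits_alpha_free_sccs:
  fixes P0 :: "'p set" and \<delta>B :: "'p \<Rightarrow> 'a \<Rightarrow> 'p set" and \<beta> :: "'p set" and gB :: "'a list \<Rightarrow> 'p"
  assumes A: "automaton \<Sigma> Q Q0 \<delta>" and "finite \<alpha>"
    and gA: "gfg_strategy \<Sigma> Q0 \<delta> (coBuchi \<alpha>) (strat m0 \<rho> \<tau>)"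
    and gB: "gfg_strategy \<Sigma> P0 \<delta>B (Buchi \<beta>) gB" and "finite \<beta>"
    and L: "lang \<Sigma> P0 \<delta>B (Buchi \<beta>) = lang \<Sigma> Q0 \<delta> (coBuchi \<alpha>)"
    and wL: "w \<in> lang \<Sigma> Q0 \<delta> (coBuchi \<alpha>)"
  shows "Buchi (alpha_free_scc_states \<Sigma> Q \<delta> \<alpha>) (inf_set (\<lambda>n. strat m0 \<rho> \<tau> (prefix n w)))"
proof -
  have w: "inf_word \<Sigma> w" using wL unfolding lang_def by blast
  define mr where "mr n = mfold \<rho> (prefix n w) m0" for n
  have "range mr \<subseteq> M"
    unfolding mr_def using reachable_memory_in prefix_in_lists[OF w] by blast
  then have "finite (range mr)"
    using transducer finite_subset unfolding transducer_def by auto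
  then obtain m where m: "\<exists>\<^sub>\<infinity>n. mr n = m"
    using limit_nonempty limit_iff_frequent by metis
  then have "\<tau> m \<in> inf_set (\<lambda>n. strat m0 \<rho> \<tau> (prefix n w))"
    unfolding inf_set_def strat_def mr_def by (auto elim: INFM_mono)
  moreover have "\<tau> m \<in> alpha_free_scc_states \<Sigma> Q \<delta> \<alpha>"
    using recurrent_memory_alpha_free[OF assms] m unfolding mr_def .
  ultimately show ?thesis unfolding Buchi_def by blast
qed

end

theorem theorem18:
  fixes \<Sigma> :: "'a set" and Q Q0 :: "'q set" and \<delta> :: "'q \<Rightarrow> 'a \<Rightarrow> 'q set" and \<alpha> :: "'q set"
    and P P0 :: "'p set" and \<delta>B :: "'p \<Rightarrow> 'a \<Rightarrow> 'p set" and \<beta> :: "'p set"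
  assumes A: "automaton \<Sigma> Q Q0 \<delta>" and \<alpha>Q: "\<alpha> \<subseteq> Q"
    and A_gfg: "GFG \<Sigma> Q0 \<delta> (coBuchi \<alpha>)"
    and A_tight: "tight \<Sigma> Q Q0 \<delta> \<alpha>"
    and B: "automaton \<Sigma> P P0 \<delta>B" and \<beta>P: "\<beta> \<subseteq> P"
    and B_weak: "weak \<Sigma> P \<delta>B \<beta>"
    and B_gfg: "GFG \<Sigma> P0 \<delta>B (Buchi \<beta>)"
    and B_lang: "lang \<Sigma> P0 \<delta>B (Buchi \<beta>) = lang \<Sigma> Q0 \<delta> (coBuchi \<alpha>)"
  shows "\<exists>\<alpha>' \<subseteq> Q. weak \<Sigma> Q \<delta> \<alpha>' \<and> GFG \<Sigma> Q0 \<delta> (Buchi \<alpha>') \<and>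
           lang \<Sigma> Q0 \<delta> (Buchi \<alpha>') = lang \<Sigma> Q0 \<delta> (coBuchi \<alpha>)"
proof -
  obtain M m0 \<rho> \<tau> where tr: "transducer \<Sigma> M m0 \<rho>"
    and gA: "gfg_strategy \<Sigma> Q0 \<delta> (coBuchi \<alpha>) (strat m0 \<rho> \<tau>)"
    and uses: "\<forall>q\<in>Q. \<forall>a\<in>\<Sigma>. \<forall>q'\<in>\<delta> q a. used \<Sigma> (strat m0 \<rho> \<tau>) q a q'"
    and irrepl: "\<forall>m\<in>M. \<forall>m'\<in>M. \<not> replaceable \<Sigma> M \<rho> \<tau> \<alpha> m m'"
    using A_tight unfolding tight_def by blast
  interpret tight_transducer \<Sigma> Q \<delta> \<alpha> M m0 \<rho> \<tau>
    using tr uses irrepl by (rule tight_transducer.intro)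
  obtain gB where gB: "gfg_strategy \<Sigma> P0 \<delta>B (Buchi \<beta>) gB"
    using B_gfg unfolding GFG_def by blast
  have "finite \<alpha>" using A finite_subset[OF \<alpha>Q] unfolding automaton_def by blast
  have "finite \<beta>" using B finite_subset[OF \<beta>P] unfolding automaton_def by blast
  have accepting: "Buchi (alpha_free_scc_states \<Sigma> Q \<delta> \<alpha>) (inf_set (\<lambda>n. strat m0 \<rho> \<tau> (prefix n w)))"
    if "w \<in> lang \<Sigma> Q0 \<delta> (coBuchi \<alpha>)" for w
    using strategy_visits_alpha_free_sccs[OF A \<open>finite \<alpha>\<close> gA gB \<open>finite \<beta>\<close> B_lang that] .
  let ?\<alpha>' = "alpha_free_scc_states \<Sigma> Q \<delta> \<alpha>"
  have gfg': "gfg_strategy \<Sigma> Q0 \<delta> (Buchi ?\<alpha>') (strat m0 \<rho> \<tau>)"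
    using gA lang_Buchi_alpha_free_subset[OF A] accepting by (rule gfg_strategy_transfer(1))
  have lang': "lang \<Sigma> Q0 \<delta> (Buchi ?\<alpha>') = lang \<Sigma> Q0 \<delta> (coBuchi \<alpha>)"
    using gA lang_Buchi_alpha_free_subset[OF A] accepting by (rule gfg_strategy_transfer(2))
  show ?thesis
  proof (intro exI conjI)
    show "?\<alpha>' \<subseteq> Q" by (rule alpha_free_scc_states_subset)
    show "weak \<Sigma> Q \<delta> ?\<alpha>'" by (rule weak_alpha_free_scc_states)
    show "GFG \<Sigma> Q0 \<delta> (Buchi ?\<alpha>')" unfolding GFG_def using gfg' by blast
  qed (fact lang')
qed

end
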